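(* Let $g>0$, $H>0$, $l\in(0,1)$, $u_1,u_2\in\mathbb{R}$, and let $u\in\{u_1,u_2\}$. Define $$M=\begin{pmatrix}1&0&0\\-u&1&0\\-u&0&1\end{pmatrix},\qquad A=\begin{pmatrix}0&l&1-l\\ gH-u_1^2&2u_1-u&0\\ gH-u_2^2&0&2u_2-u\end{pmatrix}.$$ Then $M^{-1}A$ has three distinct real eigenvalues (equivalently, $x\mapsto\det(A-xM)$ has three distinct real roots). Consequently the two-layer system below, written in the quasilinear form $M(X)\partial_t X+A(X)\partial_x X=S(X)$ with $X=(H,q_1,q_2)^T$, $q_i=Hu_i$, is strictly hyperbolic whenever $H>0$.
   Context: The two-layer multilayer Saint-Venant system with mass exchange (layer thicknesses $h_1=lH$, $h_2=(1-l)H$, $l\in(0,1)$ fixed) reads $$\partial_t H+l\,\partial_x(Hu_1)+(1-l)\,\partial_x(Hu_2)=0,$$ $$\partial_t(Hu_1)+\partial_x(Hu_1^2)+\tfrac g2\partial_x(H^2)=-gH\partial_x z_b+u\big(\partial_t H+\partial_x(Hu_1)\big)-H\partial_x p^a+\tfrac{2\nu}{lH}(u_2-u_1)-\tilde\kappa\,u_1,$$ $$\partial_t(Hu_2)+\partial_x(Hu_2^2)+\tfrac g2\partial_x(H^2)=-gH\partial_x z_b+u\big(\partial_t H+\partial_x(Hu_2)\big)-\tfrac{2\nu}{(1-l)H}(u_2-u_1)-H\partial_x p^a,$$ where $H$ is the total water height, $u_1,u_2$ the layer velocities, $z_b$ the bottom, $p^a$ the atmospheric pressure, $\nu,\tilde\kappa\ge0$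 viscosity and friction coefficients, and $u=u_{3/2}$ is the interface velocity, which is taken equal to $u_1$ or $u_2$ by upwinding according to the sign of the mass exchange between the layers. The source terms (not involving derivatives of the unknowns) form $S(X)$. *)

theory Defs
  imports "HOL-Analysis.Analysis"
begin

definition is_eigenvalue :: "real^'n^'n \<Rightarrow> real \<Rightarrow> bool" where
  "is_eigenvalue B c \<longleftrightarrow> (\<exists>v::real^'n. v \<noteq> 0 \<and> B *v v = c *\<^sub>R v)"

definition Mmat :: "real \<Rightarrow> real^3^3" where
  "Mmat u = vector [vector [1, 0, 0], vector [-u, 1, 0], vector [-u, 0, 1]]"

definition Amat :: "real \<Rightarrow> real \<Rightarrow> real \<Rightarrow> real \<Rightarrow> real \<Rightarrow> real \<Rightarrow> real^3^3" where
  "Amat g H l u1 u2 u = vector [vector [0, l, 1 - l],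
                               vector [g*H - u1^2, 2*u1 - u, 0],
                               vector [g*H - u2^2, 0, 2*u2 - u]]"

end

theory Submission
  imports Defs
begin

text \<open>
  Writing \<open>y = c - u\<close> for the eigenvalue relative to the interface velocity, \<open>det (A - c M)\<close>
  is a cubic in \<open>y\<close> with leading coefficient \<open>-1\<close>, namely
  \<open>\<lambda> (2d - y)(y\<^sup>2 - gH) + (1 - \<lambda>) y (gH - (y - d)\<^sup>2)\<close>, where \<open>d\<close> is the velocity of
  the other layer relative to \<open>u\<close>. For \<open>d > 0\<close> it is positive at \<open>-\<surd>(gH)\<close>, negative
  at \<open>0\<close>, positive at \<open>\<surd>(gH)\<close> or \<open>d + \<surd>(gH)\<close>, and negative at \<open>2d + 2\<surd>(gH)\<close>, so the
  intermediate value theorem gives three distinct real roots; \<open>d < 0\<close> follows by the symmetry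
  \<open>(d, y) \<mapsto> (-d, -y)\<close>.
\<close>

lemma matrix_inv_left:
  fixes M :: "'a::semiring_1^'n^'n"
  assumes "invertible M"
  shows "matrix_inv M ** M = mat 1"
  using someI_ex[OF assms[unfolded invertible_def]] unfolding matrix_inv_def by blast

lemma is_eigenvalue_matrix_inv_mult:
  fixes A M :: "real^'n^'n"
  assumes "invertible M" and "det (A - c *\<^sub>R M) = 0"
  shows "is_eigenvalue (matrix_inv M ** A) c"
proof -
  have "\<not> invertible (A - c *\<^sub>R M)"
    using assms(2) by (simp add: invertible_det_nz)
  then obtain v where v: "v \<noteq> 0" "(A - c *\<^sub>R M) *v v = 0"
    unfolding invertible_left_inverse matrix_left_invertible_ker by blast
  have "(A - c *\<^sub>R M) *v v = A *v v - c *\<^sub>R (M *v v)"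
    by (simp only: matrix_vector_mult_diff_rdistrib scaleR_matrix_vector_assoc)
  with v(2) have "A *v v = c *\<^sub>R (M *v v)"
    by simp
  then have "(matrix_inv M ** A) *v v = c *\<^sub>R ((matrix_inv M ** M) *v v)"
    by (simp add: matrix_vector_mul_assoc[symmetric] matrix_vector_mult_scaleR)
  also have "\<dots> = c *\<^sub>R v"
    by (simp add: matrix_inv_left[OF assms(1)])
  finally have "(matrix_inv M ** A) *v v = c *\<^sub>R v" .
  with v(1) show ?thesis
    unfolding is_eigenvalue_def by blast
qed

lemma invertible_Mmat: "invertible (Mmat u)"
proof -
  have "vector [vector [1, 0, 0], vector [u, 1, 0], vector [u, 0, 1]] ** Mmat u = mat 1"
    by (simp add: Mmat_def vec_eq_iff forall_3 matrix_matrix_mult_def sum_3 mat_def)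
  then show ?thesis using invertible_left_inverse by blast
qed

text \<open>\<open>layer_cubic \<lambda> G d y = det (A - c M)\<close> for \<open>G = gH\<close>, \<open>y = c - u\<close>, \<open>d\<close> the velocity of the
  other layer minus \<open>u\<close>, and \<open>\<lambda>\<close> the thickness fraction of the layer moving with velocity \<open>u\<close>.\<close>
definition layer_cubic :: "real \<Rightarrow> real \<Rightarrow> real \<Rightarrow> real \<Rightarrow> real" where
  "layer_cubic lam G d y = - (y^3) + 2*d*y^2 + (G - (1-lam)*d^2)*y - 2*d*lam*G"

lemma det_pencil_Mmat_u1:
  "det (Amat g H l u1 u2 u1 - c *\<^sub>R Mmat u1) = layer_cubic l (g*H) (u2 - u1) (c - u1)"
  by (simp add: det_3 Amat_def Mmat_def layer_cubic_def)
    (simp add: algebra_simps power2_eq_square power3_eq_cube)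

lemma det_pencil_Mmat_u2:
  "det (Amat g H l u1 u2 u2 - c *\<^sub>R Mmat u2) = layer_cubic (1-l) (g*H) (u1 - u2) (c - u2)"
  by (simp add: det_3 Amat_def Mmat_def layer_cubic_def)
    (simp add: algebra_simps power2_eq_square power3_eq_cube)

lemma IVT_strict_sign_change:
  fixes f :: "real \<Rightarrow> real"
  assumes "a < b" and "f a * f b < 0" and "\<And>x. isCont f x"
  shows "\<exists>y. a < y \<and> y < b \<and> f y = 0"
proof -
  have "\<exists>y. a \<le> y \<and> y \<le> b \<and> f y = 0"
  proof (cases "f a < 0")
    case True
    with assms(2) have "f b > 0" by (simp add: mult_less_0_iff)
    with True show ?thesis using IVT[of f a 0 b] assms(1,3) by auto
  next
    case False
    with assms(2) have "f a > 0" "f b < 0" by (auto simp: mult_less_0_iff)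
    then show ?thesis using IVT2[of f b 0 a] assms(1,3) by auto
  qed
  moreover have "f a \<noteq> 0" "f b \<noteq> 0" using assms(2) by auto
  ultimately show ?thesis by (metis order_le_less)
qed

lemma isCont_layer_cubic: "isCont (layer_cubic lam G d) y"
  unfolding layer_cubic_def by (intro continuous_intros)

lemma layer_cubic_uminus: "layer_cubic lam G (- d) (- y) = - layer_cubic lam G d y"
  unfolding layer_cubic_def by (simp add: algebra_simps power2_eq_square power3_eq_cube)

lemma layer_cubic_three_roots_pos:
  assumes "0 < lam" "lam < 1" "s > 0" "d > 0"
  shows "\<exists>y1 y2 y3. y1 < y2 \<and> y2 < y3 \<and> layer_cubic lam (s^2) d y1 = 0
           \<and> layer_cubic lam (s^2) d y2 = 0 \<and> layer_cubic lam (s^2) d y3 = 0"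
proof -
  let ?p = "layer_cubic lam (s^2) d"
  have root: "\<exists>y. a < y \<and> y < b \<and> ?p y = 0" if "a < b" "?p a * ?p b < 0" for a b
    using IVT_strict_sign_change[OF that isCont_layer_cubic] .
  have "?p (- s) = (1 - lam) * (s * d * (2 * s + d))"
    by (simp add: layer_cubic_def algebra_simps power2_eq_square power3_eq_cube)
  then have pos_minus_s: "?p (- s) > 0"
    using assms by simp
  have neg_0: "?p 0 < 0"
    using assms by (simp add: layer_cubic_def)
  obtain q where "0 < q" "q < 2 * d + 2 * s" and pos_q: "?p q > 0"
  proof (cases "d < 2 * s")
    case True
    have "?p s = (1 - lam) * (s * d * (2 * s - d))"
      by (simp add: layer_cubic_def algebra_simps power2_eq_square power3_eq_cube)
    with True assms show ?thesis by (intro that[of s]) simp_all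
  next
    case False
    have "?p (d + s) = lam * ((d - s) * d * (d + 2 * s))"
      by (simp add: layer_cubic_def algebra_simps power2_eq_square power3_eq_cube)
    with False assms show ?thesis by (intro that[of "d + s"]) simp_all
  qed
  have "?p (2 * d + 2 * s) = - (lam * (2 * s) * ((2 * d + 3 * s) * (2 * d + s)))
      - (1 - lam) * (2 * d + 2 * s) * ((d + 3 * s) * (d + s))"
    by (simp add: layer_cubic_def algebra_simps power2_eq_square power3_eq_cube)
  moreover have "lam * (2 * s) * ((2 * d + 3 * s) * (2 * d + s)) > 0"
    and "(1 - lam) * (2 * d + 2 * s) * ((d + 3 * s) * (d + s)) > 0"
    using assms by simp_all
  ultimately have neg_far: "?p (2 * d + 2 * s) < 0"
    by linarith
  obtain y1 where "y1 < 0" "?p y1 = 0"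
    using root[of "- s" 0] assms(3) pos_minus_s neg_0 mult_pos_neg by fastforce
  moreover obtain y2 where "0 < y2" "y2 < q" "?p y2 = 0"
    using root[of 0 q] \<open>0 < q\<close> neg_0 pos_q mult_neg_pos by blast
  moreover obtain y3 where "q < y3" "?p y3 = 0"
    using root[of q "2 * d + 2 * s"] \<open>q < 2 * d + 2 * s\<close> pos_q neg_far mult_pos_neg by blast
  ultimately show ?thesis
    by (intro exI[of _ y1] exI[of _ y2] exI[of _ y3]) simp
qed

lemma layer_cubic_three_roots:
  assumes "0 < lam" "lam < 1" "G > 0"
  shows "\<exists>y1 y2 y3. y1 < y2 \<and> y2 < y3 \<and> layer_cubic lam G d y1 = 0
           \<and> layer_cubic lam G d y2 = 0 \<and> layer_cubic lam G d y3 = 0"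
proof -
  define s where "s = sqrt G"
  have "s > 0" and G: "G = s^2"
    using assms(3) by (simp_all add: s_def)
  consider "d > 0" | "d < 0" | "d = 0"
    by linarith
  then show ?thesis
  proof cases
    case 1
    then show ?thesis
      using layer_cubic_three_roots_pos[OF assms(1,2) \<open>s > 0\<close>] by (simp only: G)
  next
    case 2
    then have "0 < - d"
      by simp
    then obtain y1 y2 y3 where "y1 < y2" "y2 < y3" and roots: "layer_cubic lam G (- d) y1 = 0"
      "layer_cubic lam G (- d) y2 = 0" "layer_cubic lam G (- d) y3 = 0"
      using layer_cubic_three_roots_pos[OF assms(1,2) \<open>s > 0\<close>] unfolding G by blast
    have mirror: "layer_cubic lam G d (- y) = 0" if "layer_cubic lam G (- d) y = 0" for y
      using layer_cubic_uminus[of lam G d "- y"] that by simp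
    show ?thesis
      using \<open>y1 < y2\<close> \<open>y2 < y3\<close> mirror[OF roots(3)] mirror[OF roots(2)] mirror[OF roots(1)]
      by (intro exI[of _ "- y3"] exI[of _ "- y2"] exI[of _ "- y1"]) simp
  next
    case 3
    have "layer_cubic lam G d y = y * (s - y) * (s + y)" for y
      by (simp add: 3 G layer_cubic_def algebra_simps power2_eq_square power3_eq_cube)
    then show ?thesis
      using \<open>s > 0\<close> by (intro exI[of _ "- s"] exI[of _ 0] exI[of _ s]) simp
  qed
qed

lemma three_eigenvalues_of_layer_pencil:
  fixes A M :: "real^'n^'n"
  assumes "invertible M" "0 < lam" "lam < 1" "G > 0"
    and det_pencil: "\<And>c. det (A - c *\<^sub>R M) = layer_cubic lam G d (c - w)"
  shows "\<exists>c1 c2 c3. c1 \<noteq> c2 \<and> c1 \<noteq> c3 \<and> c2 \<noteq> c3 \<and>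
           is_eigenvalue (matrix_inv M ** A) c1 \<and>
           is_eigenvalue (matrix_inv M ** A) c2 \<and>
           is_eigenvalue (matrix_inv M ** A) c3"
proof -
  obtain y1 y2 y3 where y: "y1 < y2" "y2 < y3" "layer_cubic lam G d y1 = 0"
    "layer_cubic lam G d y2 = 0" "layer_cubic lam G d y3 = 0"
    using layer_cubic_three_roots[OF assms(2-4)] by blast
  have "is_eigenvalue (matrix_inv M ** A) (w + y)" if "layer_cubic lam G d y = 0" for y
    using is_eigenvalue_matrix_inv_mult[OF assms(1)] det_pencil[of "w + y"] that by simp
  with y show ?thesis
    by (intro exI[of _ "w + y1"] exI[of _ "w + y2"] exI[of _ "w + y3"]) simp
qed

theorem mainTheorem2:
  fixes g H l u1 u2 u :: real
  assumes "g > 0" and "H > 0" and "0 < l" and "l < 1"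
    and "u = u1 \<or> u = u2"
  shows "\<exists>c1 c2 c3. c1 \<noteq> c2 \<and> c1 \<noteq> c3 \<and> c2 \<noteq> c3 \<and>
           is_eigenvalue (matrix_inv (Mmat u) ** Amat g H l u1 u2 u) c1 \<and>
           is_eigenvalue (matrix_inv (Mmat u) ** Amat g H l u1 u2 u) c2 \<and>
           is_eigenvalue (matrix_inv (Mmat u) ** Amat g H l u1 u2 u) c3"
proof -
  have "g * H > 0" using assms(1,2) by simp
  from assms(5) show ?thesis
  proof
    assume "u = u1"
    then show ?thesis
      using three_eigenvalues_of_layer_pencil[OF invertible_Mmat assms(3,4) \<open>g * H > 0\<close>]
        det_pencil_Mmat_u1 by blast
  next
    assume "u = u2"
    have "0 < 1 - l" "1 - l < 1" using assms(3,4) by simp_all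
    with \<open>u = u2\<close> show ?thesis
      using three_eigenvalues_of_layer_pencil[OF invertible_Mmat _ _ \<open>g * H > 0\<close>]
        det_pencil_Mmat_u2 by blast
  qed
qed

end
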